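(* Let $X$ be a set and $d,\rho$ metrics on $X$ such that $d$ is quasisymmetric to $\rho$, and assume $(X,d)$ is uniformly shrinking. Then (1) $(X,\rho)$ is uniformly shrinking; (2) if a measure $\mu$ on $X$ satisfies $(\mathrm{VD})_d$, then it also satisfies $(\mathrm{VD})_\rho$.
   Context: $d$ is quasisymmetric to $\rho$ if there is a homeomorphism $\theta$ of $[0,\infty)$ with $\rho(x,y)/\rho(x,z)\le\theta(d(x,y)/d(x,z))$ for all $x\ne z$. A metric space $(X,d)$ is uniformly shrinking if there is $\alpha\in(0,1)$ such that for all $x\in X$ and $r>0$ with $B_d(x,r)\ne X$ and $B_d(x,r)\ne\{x\}$, one has $B_d(x,r)\setminus B_d(x,\alpha r)\ne\emptyset$ (open balls). $\mu$ satisfies $(\mathrm{VD})_d$ if there is $C>0$ with $\mu(B_d(x,2r))\le C\mu(B_d(x,r))$ for all $x\in X$, $r>0$. *)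

theory Defs
  imports "HOL-Analysis.Analysis" "HOL-Probability.Probability"
begin

definition quasisymmetric :: "'a set \<Rightarrow> ('a \<Rightarrow> 'a \<Rightarrow> real) \<Rightarrow> ('a \<Rightarrow> 'a \<Rightarrow> real) \<Rightarrow> bool" where
  "quasisymmetric X d \<rho> \<longleftrightarrow>
     (\<exists>\<theta> \<theta>'. homeomorphism {0..} {0..} \<theta> \<theta>' \<and>
        (\<forall>x\<in>X. \<forall>y\<in>X. \<forall>z\<in>X. x \<noteq> z \<longrightarrow> \<rho> x y / \<rho> x z \<le> \<theta> (d x y / d x z)))"

definition uniformly_shrinking :: "'a set \<Rightarrow> ('a \<Rightarrow> 'a \<Rightarrow> real) \<Rightarrow> bool" where
  "uniformly_shrinking X d \<longleftrightarrow>
     (\<exists>\<alpha>::real. 0 < \<alpha> \<and> \<alpha> < 1 \<and>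
        (\<forall>x\<in>X. \<forall>r>0. Metric_space.mball X d x r \<noteq> X \<and> Metric_space.mball X d x r \<noteq> {x} \<longrightarrow>
           Metric_space.mball X d x r - Metric_space.mball X d x (\<alpha> * r) \<noteq> {}))"

definition volume_doubling :: "'a set \<Rightarrow> ('a \<Rightarrow> 'a \<Rightarrow> real) \<Rightarrow> 'a measure \<Rightarrow> bool" where
  "volume_doubling X d \<mu> \<longleftrightarrow>
     (\<exists>C::real. C > 0 \<and>
        (\<forall>x\<in>X. \<forall>r>0. emeasure \<mu> (Metric_space.mball X d x (2 * r))
                         \<le> ennreal C * emeasure \<mu> (Metric_space.mball X d x r)))"

definition metric_borel_sets :: "'a set \<Rightarrow> ('a \<Rightarrow> 'a \<Rightarrow> real) \<Rightarrow> 'a set set" where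
  "metric_borel_sets X d = sigma_sets X {U. openin (Metric_space.mtopology X d) U}"

end

theory Submission
  imports Defs
begin

text \<open>
  Quasisymmetry compares \<open>\<rho>\<close>-ratios with \<open>d\<close>-ratios at a common centre, in both directions and
  uniformly in the centre. Consequently every \<open>\<rho>\<close>-ball is squeezed between two \<open>d\<close>-balls of
  comparable radii: if \<open>R\<close> is the \<open>d\<close>-distance from \<open>x\<close> to the complement of \<open>B\<^sub>\<rho>(x,r)\<close>, then
  \<open>B\<^sub>d(x,R) \<subseteq> B\<^sub>\<rho>(x,r)\<close> and \<open>B\<^sub>\<rho>(x,2r) \<subseteq> B\<^sub>d(x,R/\<eta>)\<close> with \<open>\<eta>\<close> independent of \<open>x\<close> and \<open>r\<close>.
  Shrinking of \<open>B\<^sub>d(x,R)\<close> yields a point of \<open>B\<^sub>\<rho>(x,r)\<close> whose \<open>d\<close>-distance to \<open>x\<close> is comparable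
  to \<open>R\<close>, hence whose \<open>\<rho>\<close>-distance is comparable to \<open>r\<close>; and iterating \<open>d\<close>-doubling about
  \<open>log\<^sub>2(1/\<eta>)\<close> times gives \<open>\<rho>\<close>-doubling.
\<close>

lemma homeomorphism_nonneg_reals_zero:
  fixes \<theta> \<theta>' :: "real \<Rightarrow> real"
  assumes "homeomorphism {0..} {0..} \<theta> \<theta>'"
  shows "\<theta> 0 = 0"
proof -
  have cont: "continuous_on {0..} \<theta>" and img: "\<theta> ` {0..} = {0..}"
    using assms by (simp_all add: homeomorphism_def)
  have inj: "inj_on \<theta> {0..}"
    by (rule inj_on_inverseI[where g = \<theta>']) (rule homeomorphism_apply1[OF assms])
  have "0 \<le> \<theta> 0" using img by auto
  obtain s where s: "s \<ge> 0" "\<theta> s = 0" using img by (metis atLeast_iff imageE order_refl)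
  obtain t where t: "t \<ge> 0" "\<theta> t = \<theta> 0 + 1"
    using img \<open>0 \<le> \<theta> 0\<close> by (metis atLeast_iff imageE add_nonneg_nonneg zero_le_one)
  consider "strict_mono_on {0..} \<theta>" | "strict_antimono_on {0..} \<theta>"
    using inj injective_eq_monotone_map[OF _ cont] by auto
  then show ?thesis
  proof cases
    case 1
    have "\<theta> 0 \<le> \<theta> s" using strict_mono_on_leD[OF 1, of 0 s] s by simp
    then show ?thesis using s \<open>0 \<le> \<theta> 0\<close> by linarith
  next
    case 2
    have "\<theta> t \<le> \<theta> 0"
      using monotone_onD[OF 2, of 0 t] t by (cases "t = 0") auto
    then show ?thesis using t by linarith
  qed
qed

lemma homeomorphism_nonneg_reals_small_near_zero:
  fixes \<theta> \<theta>' :: "real \<Rightarrow> real"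
  assumes "homeomorphism {0..} {0..} \<theta> \<theta>'" and "\<epsilon> > 0"
  obtains \<eta> where "\<eta> > 0" and "\<And>t. 0 \<le> t \<Longrightarrow> t \<le> \<eta> \<Longrightarrow> \<theta> t < \<epsilon>"
proof -
  have "continuous_on {0..} \<theta>" using assms(1) by (simp add: homeomorphism_def)
  then obtain \<delta> where "\<delta> > 0" and \<delta>: "\<And>t. t \<ge> 0 \<Longrightarrow> \<bar>t\<bar> < \<delta> \<Longrightarrow> \<bar>\<theta> t - \<theta> 0\<bar> < \<epsilon>"
    using assms(2) unfolding continuous_on_iff by (metis atLeast_iff dist_real_def order_refl diff_zero)
  show thesis
  proof
    show "\<delta> / 2 > 0" using \<open>\<delta> > 0\<close> by simp
    show "\<theta> t < \<epsilon>" if "0 \<le> t" "t \<le> \<delta> / 2" for t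
      using \<delta>[of t] that \<open>\<delta> > 0\<close> homeomorphism_nonneg_reals_zero[OF assms(1)] by simp
  qed
qed

lemma volume_doubling_iterate:
  assumes "volume_doubling X d \<mu>"
  obtains C where "C \<ge> 1" and "\<And>x r n. x \<in> X \<Longrightarrow> r > 0 \<Longrightarrow>
    emeasure \<mu> (Metric_space.mball X d x (2 ^ n * r))
      \<le> ennreal (C ^ n) * emeasure \<mu> (Metric_space.mball X d x r)"
proof -
  let ?B = "Metric_space.mball X d"
  obtain C0 where C0: "\<And>x r. x \<in> X \<Longrightarrow> r > 0 \<Longrightarrow>
      emeasure \<mu> (?B x (2 * r)) \<le> ennreal C0 * emeasure \<mu> (?B x r)"
    using assms unfolding volume_doubling_def by blast
  define C where "C = max C0 1"
  have "C \<ge> 1" by (simp add: C_def)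
  have "emeasure \<mu> (?B x (2 ^ n * r)) \<le> ennreal (C ^ n) * emeasure \<mu> (?B x r)"
    if "x \<in> X" "r > 0" for x r n
  proof (induction n)
    case 0
    then show ?case by simp
  next
    case (Suc n)
    have "emeasure \<mu> (?B x (2 ^ Suc n * r)) = emeasure \<mu> (?B x (2 * (2 ^ n * r)))"
      by (simp add: mult.assoc)
    also have "\<dots> \<le> ennreal C0 * emeasure \<mu> (?B x (2 ^ n * r))"
      using C0 that by simp
    also have "\<dots> \<le> ennreal C * (ennreal (C ^ n) * emeasure \<mu> (?B x r))"
      by (intro mult_mono Suc) (auto simp: C_def)
    also have "\<dots> = ennreal (C ^ Suc n) * emeasure \<mu> (?B x r)"
      using \<open>C \<ge> 1\<close> by (simp add: ennreal_mult mult.assoc)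
    finally show ?case .
  qed
  with \<open>C \<ge> 1\<close> show thesis using that by blast
qed

locale quasisymmetric_pair = D: Metric_space X d + P: Metric_space X \<rho>
  for X :: "'a set" and d \<rho> :: "'a \<Rightarrow> 'a \<Rightarrow> real" +
  fixes \<theta> \<theta>' :: "real \<Rightarrow> real"
  assumes homeomorphism_\<theta>: "homeomorphism {0..} {0..} \<theta> \<theta>'"
    and rho_ratio_le_theta: "\<lbrakk>x \<in> X; y \<in> X; z \<in> X; x \<noteq> z\<rbrakk> \<Longrightarrow> \<rho> x y / \<rho> x z \<le> \<theta> (d x y / d x z)"
begin

lemma rho_ratio_small:
  assumes "\<epsilon> > 0"
  obtains \<eta> where "\<eta> > 0"
    and "\<And>x u z. \<lbrakk>x \<in> X; u \<in> X; z \<in> X; x \<noteq> z; d x u \<le> \<eta> * d x z\<rbrakk> \<Longrightarrow> \<rho> x u < \<epsilon> * \<rho> x z"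
proof -
  obtain \<eta> where "\<eta> > 0" and \<eta>: "\<And>t. 0 \<le> t \<Longrightarrow> t \<le> \<eta> \<Longrightarrow> \<theta> t < \<epsilon>"
    using homeomorphism_nonneg_reals_small_near_zero[OF homeomorphism_\<theta> assms] by blast
  have "\<rho> x u < \<epsilon> * \<rho> x z"
    if "x \<in> X" "u \<in> X" "z \<in> X" "x \<noteq> z" "d x u \<le> \<eta> * d x z" for x u z
  proof -
    have "d x z > 0" "\<rho> x z > 0" using that by auto
    then have "d x u / d x z \<le> \<eta>" using that(5) by (simp add: divide_le_eq mult.commute)
    then have "\<rho> x u / \<rho> x z < \<epsilon>"
      using rho_ratio_le_theta[of x u z] \<eta>[of "d x u / d x z"] that by simp
    then show ?thesis using \<open>\<rho> x z > 0\<close> by (simp add: divide_less_eq)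
  qed
  with \<open>\<eta> > 0\<close> show thesis using that by blast
qed

lemma rho_ratio_bounded:
  obtains M where "M \<ge> 1"
    and "\<And>x u z. \<lbrakk>x \<in> X; u \<in> X; z \<in> X; x \<noteq> z; d x u \<le> T * d x z\<rbrakk> \<Longrightarrow> \<rho> x u \<le> M * \<rho> x z"
proof -
  have "continuous_on {0..T} \<theta>"
    using homeomorphism_\<theta> continuous_on_subset[of "{0..}" \<theta> "{0..T}"] by (simp add: homeomorphism_def)
  then have "compact (\<theta> ` {0..T})" by (simp add: compact_continuous_image)
  then obtain B where "\<forall>s \<in> \<theta> ` {0..T}. \<bar>s\<bar> \<le> B"
    using compact_imp_bounded bounded_real by metis
  then have B: "\<And>t. t \<in> {0..T} \<Longrightarrow> \<theta> t \<le> B" by (meson abs_le_D1 imageI)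
  define M where "M = max B 1"
  have "M \<ge> 1" by (simp add: M_def)
  have "\<rho> x u \<le> M * \<rho> x z"
    if "x \<in> X" "u \<in> X" "z \<in> X" "x \<noteq> z" "d x u \<le> T * d x z" for x u z
  proof -
    have "d x z > 0" "\<rho> x z > 0" using that by auto
    then have "d x u / d x z \<in> {0..T}" using that(5) by (simp add: divide_le_eq)
    then have "\<rho> x u / \<rho> x z \<le> M"
      using rho_ratio_le_theta[of x u z] B[of "d x u / d x z"] that by (simp add: M_def)
    then show ?thesis using \<open>\<rho> x z > 0\<close> by (simp add: divide_le_eq)
  qed
  with \<open>M \<ge> 1\<close> show thesis using that by blast
qed

lemma d_ratio_lower_bound:
  assumes "K > 0"
  obtains \<eta> where "\<eta> > 0"
    and "\<And>x u w. \<lbrakk>x \<in> X; u \<in> X; w \<in> X; x \<noteq> u; \<rho> x u \<le> K * \<rho> x w\<rbrakk> \<Longrightarrow> \<eta> * d x u < d x w"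
proof -
  obtain \<eta> where "\<eta> > 0"
    and small: "\<And>x w u. \<lbrakk>x \<in> X; w \<in> X; u \<in> X; x \<noteq> u; d x w \<le> \<eta> * d x u\<rbrakk> \<Longrightarrow> \<rho> x w < (1 / K) * \<rho> x u"
    using rho_ratio_small[of "1 / K"] assms by auto
  have "\<eta> * d x u < d x w"
    if "x \<in> X" "u \<in> X" "w \<in> X" "x \<noteq> u" "\<rho> x u \<le> K * \<rho> x w" for x u w
  proof (rule ccontr)
    assume "\<not> \<eta> * d x u < d x w"
    then have "K * \<rho> x w < \<rho> x u"
      using small[of x w u] that assms by (simp add: field_simps)
    with that(5) show False by simp
  qed
  with \<open>\<eta> > 0\<close> show thesis using that by blast
qed

lemma openin_mball_rho: "openin D.mtopology (P.mball x r)"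
  unfolding D.openin_mtopology
proof (intro conjI allI impI)
  show "P.mball x r \<subseteq> X" by (rule P.mball_subset_mspace)
  fix y assume "y \<in> P.mball x r"
  then have "x \<in> X" "y \<in> X" "\<rho> x y < r" by auto
  show "\<exists>e>0. D.mball y e \<subseteq> P.mball x r"
  proof (cases "X = {y}")
    case True
    have "D.mball y 1 \<subseteq> X" by (rule D.mball_subset_mspace)
    with True have "D.mball y 1 \<subseteq> P.mball x r" using \<open>y \<in> P.mball x r\<close> by blast
    then show ?thesis using zero_less_one by blast
  next
    case False
    then obtain z where "z \<in> X" "y \<noteq> z" using \<open>y \<in> X\<close> by blast
    then have "\<rho> y z > 0" "d y z > 0" using \<open>y \<in> X\<close> by auto
    obtain \<eta> where "\<eta> > 0" and small: "\<And>u. \<lbrakk>u \<in> X; d y u \<le> \<eta> * d y z\<rbrakk> \<Longrightarrow>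
        \<rho> y u < ((r - \<rho> x y) / \<rho> y z) * \<rho> y z"
      using rho_ratio_small[of "(r - \<rho> x y) / \<rho> y z"] \<open>\<rho> x y < r\<close> \<open>\<rho> y z > 0\<close>
        \<open>y \<in> X\<close> \<open>z \<in> X\<close> \<open>y \<noteq> z\<close> by (metis diff_gt_0_iff_gt divide_pos_pos)
    have "D.mball y (\<eta> * d y z) \<subseteq> P.mball x r"
    proof
      fix u assume "u \<in> D.mball y (\<eta> * d y z)"
      then have "u \<in> X" "\<rho> y u < r - \<rho> x y"
        using small[of u] \<open>\<rho> y z > 0\<close> by auto
      then show "u \<in> P.mball x r"
        using P.triangle[of x y u] \<open>x \<in> X\<close> \<open>y \<in> X\<close> by auto
    qed
    then show ?thesis using \<open>\<eta> > 0\<close> \<open>d y z > 0\<close> by (intro exI[of _ "\<eta> * d y z"]) auto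
  qed
qed

text \<open>The \<open>R\<close> of the proof idea: the \<open>d\<close>-distance from \<open>x\<close> to the complement of \<open>B\<^sub>\<rho>(x,r)\<close>
  (a junk value if that complement is empty).\<close>
definition inner_d_radius :: "'a \<Rightarrow> real \<Rightarrow> real" where
  "inner_d_radius x r = Inf (d x ` {w \<in> X. r \<le> \<rho> x w})"

lemma mball_inner_d_radius_subset: "D.mball x (inner_d_radius x r) \<subseteq> P.mball x r"
proof
  fix y assume y: "y \<in> D.mball x (inner_d_radius x r)"
  have "bdd_below (d x ` {w \<in> X. r \<le> \<rho> x w})" by (rule bdd_belowI[of _ 0]) auto
  then have "\<not> r \<le> \<rho> x y"
    using y cInf_lower[of "d x y" "d x ` {w \<in> X. r \<le> \<rho> x w}"] by (auto simp: inner_d_radius_def)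
  then show "y \<in> P.mball x r" using y by auto
qed

lemma far_point_within_twice_inner_d_radius:
  assumes "w \<in> X" "r \<le> \<rho> x w" "inner_d_radius x r > 0"
  obtains w' where "w' \<in> X" "r \<le> \<rho> x w'" "d x w' < 2 * inner_d_radius x r"
proof -
  have "bdd_below (d x ` {w \<in> X. r \<le> \<rho> x w})" by (rule bdd_belowI[of _ 0]) auto
  moreover have "d x ` {w \<in> X. r \<le> \<rho> x w} \<noteq> {}" using assms(1,2) by auto
  moreover have "Inf (d x ` {w \<in> X. r \<le> \<rho> x w}) < 2 * inner_d_radius x r"
    using assms(3) by (simp add: inner_d_radius_def)
  ultimately show thesis
    using that by (auto simp: cInf_less_iff)
qed

lemma inner_d_radius_lower_bound:
  obtains \<eta> where "\<eta> > 0"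
    and "\<And>x r v w. \<lbrakk>x \<in> X; v \<in> X; w \<in> X; \<rho> x v < 2 * r; r \<le> \<rho> x w\<rbrakk> \<Longrightarrow> \<eta> * d x v \<le> inner_d_radius x r"
proof -
  obtain \<eta> where "\<eta> > 0"
    and lower: "\<And>x v w. \<lbrakk>x \<in> X; v \<in> X; w \<in> X; x \<noteq> v; \<rho> x v \<le> 2 * \<rho> x w\<rbrakk> \<Longrightarrow> \<eta> * d x v < d x w"
    using d_ratio_lower_bound[of 2] by auto
  have "\<eta> * d x v \<le> inner_d_radius x r"
    if "x \<in> X" "v \<in> X" "w \<in> X" "\<rho> x v < 2 * r" "r \<le> \<rho> x w" for x r v w
    unfolding inner_d_radius_def
  proof (rule cInf_greatest)
    show "d x ` {w \<in> X. r \<le> \<rho> x w} \<noteq> {}" using that by auto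
    fix t assume "t \<in> d x ` {w \<in> X. r \<le> \<rho> x w}"
    then obtain w' where "w' \<in> X" "r \<le> \<rho> x w'" "t = d x w'" by auto
    then show "\<eta> * d x v \<le> t"
      using lower[of x v w'] that by (cases "x = v") (auto simp: less_imp_le)
  qed
  with \<open>\<eta> > 0\<close> show thesis using that by blast
qed

lemma point_of_rho_ball_far_in_d:
  fixes x :: 'a and r \<alpha> :: real
  defines "R \<equiv> inner_d_radius x r"
  assumes "0 < \<alpha>" "\<alpha> \<le> 1" "R > 0"
    and shrink: "\<lbrakk>D.mball x R \<noteq> X; D.mball x R \<noteq> {x}\<rbrakk> \<Longrightarrow> D.mball x R - D.mball x (\<alpha> * R) \<noteq> {}"
    and "x \<in> X" "z \<in> X" "x \<noteq> z" "\<rho> x z < r" "w \<in> X" "r \<le> \<rho> x w"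
  obtains y where "y \<in> X" "x \<noteq> y" "\<rho> x y < r" "\<alpha> * R \<le> d x y"
proof (cases "D.mball x R = {x}")
  case True
  then have "R \<le> d x z" using \<open>z \<in> X\<close> \<open>x \<noteq> z\<close> \<open>x \<in> X\<close> by auto
  moreover have "\<alpha> * R \<le> R" using mult_right_mono[OF \<open>\<alpha> \<le> 1\<close>] \<open>R > 0\<close> by simp
  ultimately show thesis using that \<open>z \<in> X\<close> \<open>x \<noteq> z\<close> \<open>\<rho> x z < r\<close> by simp
next
  case False
  have "w \<notin> P.mball x r" using \<open>r \<le> \<rho> x w\<close> by simp
  then have "D.mball x R \<noteq> X"
    using mball_inner_d_radius_subset \<open>w \<in> X\<close> unfolding R_def by blast
  with False obtain y where y: "y \<in> D.mball x R" "y \<notin> D.mball x (\<alpha> * R)"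
    using shrink by blast
  then have "y \<in> X" "\<alpha> * R \<le> d x y" using \<open>x \<in> X\<close> by auto
  moreover have "x \<noteq> y"
    using \<open>\<alpha> * R \<le> d x y\<close> mult_pos_pos[OF \<open>0 < \<alpha>\<close> \<open>R > 0\<close>] \<open>x \<in> X\<close> by auto
  moreover have "\<rho> x y < r"
    using subsetD[OF mball_inner_d_radius_subset[of x r] y(1)[unfolded R_def]] by simp
  ultimately show thesis using that by blast
qed

lemma uniformly_shrinking_rho:
  assumes "uniformly_shrinking X d"
  shows "uniformly_shrinking X \<rho>"
proof -
  obtain \<alpha> where "0 < \<alpha>" "\<alpha> < 1" and shrink: "\<And>x r. \<lbrakk>x \<in> X; r > 0; D.mball x r \<noteq> X; D.mball x r \<noteq> {x}\<rbrakk>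
      \<Longrightarrow> D.mball x r - D.mball x (\<alpha> * r) \<noteq> {}"
    using assms unfolding uniformly_shrinking_def by blast
  obtain \<eta> where "\<eta> > 0" and lower: "\<And>x r v w. \<lbrakk>x \<in> X; v \<in> X; w \<in> X; \<rho> x v < 2 * r; r \<le> \<rho> x w\<rbrakk>
      \<Longrightarrow> \<eta> * d x v \<le> inner_d_radius x r"
    using inner_d_radius_lower_bound by blast
  obtain M where "M \<ge> 1" and bounded: "\<And>x u z. \<lbrakk>x \<in> X; u \<in> X; z \<in> X; x \<noteq> z; d x u \<le> (2 / \<alpha>) * d x z\<rbrakk>
      \<Longrightarrow> \<rho> x u \<le> M * \<rho> x z"
    using rho_ratio_bounded by blast
  have "P.mball x r - P.mball x (1 / (2 * M) * r) \<noteq> {}"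
    if "x \<in> X" "r > 0" and ne_X: "P.mball x r \<noteq> X" and ne_x: "P.mball x r \<noteq> {x}" for x r
  proof -
    define R where "R = inner_d_radius x r"
    obtain w0 where "w0 \<in> X" "r \<le> \<rho> x w0" using \<open>x \<in> X\<close> ne_X P.mball_subset_mspace by force
    obtain z where "z \<in> X" "x \<noteq> z" "\<rho> x z < r" using \<open>x \<in> X\<close> \<open>r > 0\<close> ne_x by fastforce
    then have "\<eta> * d x z \<le> R"
      using lower[of x z w0 r] \<open>x \<in> X\<close> \<open>r > 0\<close> \<open>w0 \<in> X\<close> \<open>r \<le> \<rho> x w0\<close> by (simp add: R_def)
    then have "R > 0" using \<open>\<eta> > 0\<close> \<open>z \<in> X\<close> \<open>x \<noteq> z\<close> \<open>x \<in> X\<close>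
      by (smt (verit) D.mdist_pos_less mult_pos_pos)
    then obtain w where "w \<in> X" "r \<le> \<rho> x w" "d x w < 2 * R"
      using far_point_within_twice_inner_d_radius \<open>w0 \<in> X\<close> \<open>r \<le> \<rho> x w0\<close> by (metis R_def)
    obtain y where y: "y \<in> X" "x \<noteq> y" "\<rho> x y < r" "\<alpha> * R \<le> d x y"
      using point_of_rho_ball_far_in_d[where x = x and r = r, folded R_def, OF \<open>0 < \<alpha>\<close> less_imp_le[OF \<open>\<alpha> < 1\<close>] \<open>R > 0\<close>
          shrink[OF \<open>x \<in> X\<close> \<open>R > 0\<close>] \<open>x \<in> X\<close> \<open>z \<in> X\<close> \<open>x \<noteq> z\<close> \<open>\<rho> x z < r\<close> \<open>w \<in> X\<close> \<open>r \<le> \<rho> x w\<close>]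
      by blast
    have "2 * R \<le> (2 / \<alpha>) * d x y"
      using mult_left_mono[OF y(4), of "2 / \<alpha>"] \<open>0 < \<alpha>\<close> by simp
    then have "d x w \<le> (2 / \<alpha>) * d x y" using \<open>d x w < 2 * R\<close> by linarith
    then have "r \<le> M * \<rho> x y"
      using bounded[of x w y] \<open>x \<in> X\<close> \<open>w \<in> X\<close> y(1,2) \<open>r \<le> \<rho> x w\<close> by linarith
    then have "1 / (2 * M) * r \<le> \<rho> x y"
      using \<open>M \<ge> 1\<close> \<open>r > 0\<close> by (simp add: field_simps)
    then show ?thesis using y \<open>x \<in> X\<close> by auto
  qed
  moreover have "0 < 1 / (2 * M)" "1 / (2 * M) < 1" using \<open>M \<ge> 1\<close> by auto
  ultimately show ?thesis unfolding uniformly_shrinking_def by blast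
qed

lemma rho_mball_double_subset_d_mball:
  obtains n :: nat where "\<And>x r u. \<lbrakk>x \<in> X; u \<in> X; r \<le> \<rho> x u; \<rho> x u < 2 * r\<rbrakk> \<Longrightarrow>
    inner_d_radius x r > 0 \<and> P.mball x (2 * r) \<subseteq> D.mball x (2 ^ n * inner_d_radius x r)"
proof -
  obtain \<eta> where "\<eta> > 0" and lower: "\<And>x r v w. \<lbrakk>x \<in> X; v \<in> X; w \<in> X; \<rho> x v < 2 * r; r \<le> \<rho> x w\<rbrakk>
      \<Longrightarrow> \<eta> * d x v \<le> inner_d_radius x r"
    using inner_d_radius_lower_bound by blast
  obtain n :: nat where "1 / \<eta> < 2 ^ n" using real_arch_pow[of 2 "1 / \<eta>"] by auto
  have "inner_d_radius x r > 0 \<and> P.mball x (2 * r) \<subseteq> D.mball x (2 ^ n * inner_d_radius x r)"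
    if "x \<in> X" "u \<in> X" "r \<le> \<rho> x u" "\<rho> x u < 2 * r" for x r u
  proof
    define R where "R = inner_d_radius x r"
    have "\<eta> * d x u \<le> R" using lower[of x u u r] that by (simp add: R_def)
    moreover have "d x u > 0" using that by auto
    ultimately show "R > 0" using \<open>\<eta> > 0\<close> by (smt (verit) mult_pos_pos)
    show "P.mball x (2 * r) \<subseteq> D.mball x (2 ^ n * R)"
    proof
      fix v assume "v \<in> P.mball x (2 * r)"
      then have "v \<in> X" "\<eta> * d x v \<le> R"
        using lower[of x v u r] that by (auto simp: R_def)
      then have "d x v \<le> R / \<eta>" using \<open>\<eta> > 0\<close> by (simp add: field_simps)
      moreover have "R / \<eta> < 2 ^ n * R"
        using \<open>1 / \<eta> < 2 ^ n\<close> \<open>R > 0\<close> \<open>\<eta> > 0\<close> by (simp add: field_simps)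
      ultimately show "v \<in> D.mball x (2 ^ n * R)"
        using \<open>x \<in> X\<close> \<open>v \<in> X\<close> by simp
    qed
  qed
  then show thesis using that by blast
qed

lemma volume_doubling_rho:
  assumes "sets \<mu> = metric_borel_sets X d" and "volume_doubling X d \<mu>"
  shows "volume_doubling X \<rho> \<mu>"
proof -
  obtain C where "C \<ge> 1" and iterate: "\<And>x r n. x \<in> X \<Longrightarrow> r > 0 \<Longrightarrow>
      emeasure \<mu> (D.mball x (2 ^ n * r)) \<le> ennreal (C ^ n) * emeasure \<mu> (D.mball x r)"
    using volume_doubling_iterate[OF assms(2)] by blast
  obtain n where sandwich: "\<And>x r u. \<lbrakk>x \<in> X; u \<in> X; r \<le> \<rho> x u; \<rho> x u < 2 * r\<rbrakk> \<Longrightarrow>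
      inner_d_radius x r > 0 \<and> P.mball x (2 * r) \<subseteq> D.mball x (2 ^ n * inner_d_radius x r)"
    using rho_mball_double_subset_d_mball by blast
  have measurable: "U \<in> sets \<mu>" if "openin D.mtopology U" for U
    using that assms(1) unfolding metric_borel_sets_def by auto
  have rho_ball_measurable: "P.mball x r \<in> sets \<mu>" for x r
    using measurable openin_mball_rho by blast
  have "emeasure \<mu> (P.mball x (2 * r)) \<le> ennreal (C ^ n) * emeasure \<mu> (P.mball x r)"
    if "x \<in> X" for x r
  proof (cases "P.mball x (2 * r) \<subseteq> P.mball x r")
    case True
    have "emeasure \<mu> (P.mball x (2 * r)) \<le> emeasure \<mu> (P.mball x r)"
      using True rho_ball_measurable by (rule emeasure_mono)
    also have "\<dots> \<le> ennreal (C ^ n) * emeasure \<mu> (P.mball x r)"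
      using \<open>C \<ge> 1\<close> mult_right_mono[of 1 "ennreal (C ^ n)"] by simp
    finally show ?thesis .
  next
    case False
    then obtain u where "u \<in> X" "r \<le> \<rho> x u" "\<rho> x u < 2 * r"
      by (metis P.in_mball not_le subsetI)
    define R where "R = inner_d_radius x r"
    have "R > 0" and "P.mball x (2 * r) \<subseteq> D.mball x (2 ^ n * R)"
      using sandwich[OF \<open>x \<in> X\<close> \<open>u \<in> X\<close> \<open>r \<le> \<rho> x u\<close> \<open>\<rho> x u < 2 * r\<close>] by (simp_all add: R_def)
    then have "emeasure \<mu> (P.mball x (2 * r)) \<le> emeasure \<mu> (D.mball x (2 ^ n * R))"
      using measurable by (intro emeasure_mono) auto
    also have "\<dots> \<le> ennreal (C ^ n) * emeasure \<mu> (D.mball x R)"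
      using iterate \<open>x \<in> X\<close> \<open>R > 0\<close> by blast
    also have "\<dots> \<le> ennreal (C ^ n) * emeasure \<mu> (P.mball x r)"
      using mball_inner_d_radius_subset rho_ball_measurable
      by (intro mult_left_mono emeasure_mono) (auto simp: R_def)
    finally show ?thesis .
  qed
  moreover have "C ^ n > 0" using \<open>C \<ge> 1\<close> by simp
  ultimately show ?thesis unfolding volume_doubling_def by blast
qed

end

theorem lemma6p1:
  fixes X :: "'a set" and d \<rho> :: "'a \<Rightarrow> 'a \<Rightarrow> real"
  assumes "Metric_space X d" and "Metric_space X \<rho>"
    and "quasisymmetric X d \<rho>"
    and "uniformly_shrinking X d"
  shows "uniformly_shrinking X \<rho> \<and>
         (\<forall>\<mu>::'a measure. space \<mu> = X \<and> sets \<mu> = metric_borel_sets X d \<longrightarrow>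
            volume_doubling X d \<mu> \<longrightarrow> volume_doubling X \<rho> \<mu>)"
proof -
  obtain \<theta> \<theta>' where "quasisymmetric_pair X d \<rho> \<theta> \<theta>'"
    using assms(1-3) unfolding quasisymmetric_def quasisymmetric_pair_def quasisymmetric_pair_axioms_def
    by blast
  then interpret quasisymmetric_pair X d \<rho> \<theta> \<theta>' .
  show ?thesis
    using uniformly_shrinking_rho[OF assms(4)] volume_doubling_rho by blast
qed

end
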